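(* Let $N\ge 3$, let $k$ be a positive odd integer, $l=k2^N$, let $m$ be a positive integer and $n=l+m$. For a positive integer $a$ let $g(a)=(-1)^{a-1}\frac{(2a-3)!!}{2a}$. Then $$g(n)\equiv g(m)+\begin{cases}(-1)^{\frac{m-1}{2}}\frac{l}{2}\pmod{2^{N+1}}, & \text{if } 2\nmid m,\\ l+\frac{l}{2mn}\pmod{2^{N+1}}, & \text{if } 2\mid m,\ 4\nmid m,\\ l-\frac{l}{2mn}\pmod{2^{N+1}}, & \text{if } 4\mid m,\ 8\nmid m.\end{cases}$$
   Context: For a positive odd integer $b$, $b!!=b(b-2)\cdots3\cdot1$, and $(-1)!!=1$. Congruences between rational numbers modulo $2^{N+1}$ mean the difference has $2$-adic valuation $\ge N+1$. *)

theory Defs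
  imports Complex_Main
begin

definition dfact :: "int \<Rightarrow> int" where
  "dfact b = (\<Prod>i\<in>{i\<in>{1..b}. odd i}. i)"

definition g :: "nat \<Rightarrow> rat" where
  "g a = (-1) ^ (a - 1) * of_int (dfact (2 * int a - 3)) / (2 * of_nat a)"

text \<open>Congruence of rationals modulo 2^e: the difference has 2-adic valuation >= e.\<close>
definition cong2 :: "nat \<Rightarrow> rat \<Rightarrow> rat \<Rightarrow> bool" where
  "cong2 e x y = (case quotient_of (x - y) of (p, q) \<Rightarrow> (2::int) ^ e dvd p \<and> odd q)"

end

theory Submission
  imports Defs "HOL-Number_Theory.Cong"
begin

text \<open>
  Write m = j + 1 and n = l + m. Since (2n - 3)!! = (2l - 1)!! \<cdot> \<Prod>i<j. (2l + 2i + 1), expanding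
  the product to first order in 2l and using (2l - 1)!! \<equiv> 1 + 2l (mod 2^(N+4)) gives
  (2n - 3)!! \<equiv> (2m - 3)!! + 2l ((2m - 3)!! + e) (mod 2^(N+4)), where e is the derivative at 0 of
  \<Prod>i<j. (x + 2i + 1). Consequently 2mn (g n - g m) = \<plusminus>(l c + 2^(N+4) m W) for an integer W,
  where c = 2m ((2m - 3)!! + e) - (2m - 3)!!, and the three cases come down to congruences for c
  modulo 4, 16 and 64. These depend only on j mod 32 and are checked on one period.
\<close>

section \<open>Odd double factorials modulo powers of two\<close>

text \<open>odd_fact j = (2j - 1)!!, and odd_fact_deriv j is the derivative at x = 0
  of \<Prod>i<j. (x + 2i + 1).\<close>

fun odd_fact :: "nat \<Rightarrow> int" where
  "odd_fact 0 = 1"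
| "odd_fact (Suc j) = odd_fact j * (2 * int j + 1)"

fun odd_fact_deriv :: "nat \<Rightarrow> int" where
  "odd_fact_deriv 0 = 0"
| "odd_fact_deriv (Suc j) = odd_fact_deriv j * (2 * int j + 1) + odd_fact j"

lemma dfact_eq_odd_fact: "dfact (2 * int j - 1) = odd_fact j"
proof (induction j)
  case 0
  have "{i \<in> {1..-1::int}. odd i} = {}" by auto
  then show ?case by (simp add: dfact_def)
next
  case (Suc j)
  have "{i \<in> {1..2 * int (Suc j) - 1}. odd i} = insert (2 * int j + 1) {i \<in> {1..2 * int j - 1}. odd i}"
    by auto presburger+
  moreover have "finite {i \<in> {1..2 * int j - 1}. odd i}"
    by (rule finite_subset[of _ "{1..2 * int j - 1}"]) auto
  ultimately show ?case using Suc by (simp add: dfact_def mult.commute)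
qed

text \<open>(2(L + j) - 1)!! = (2L - 1)!! \<cdot> \<Prod>i<j. (2L + 2i + 1), expanded to first order in 2L.\<close>

lemma odd_fact_add_cong:
  "[odd_fact (L + j) = odd_fact L * (odd_fact j + 2 * int L * odd_fact_deriv j)] (mod (2 * int L)^2)"
proof (induction j)
  case 0
  then show ?case by simp
next
  case (Suc j)
  have "[odd_fact (L + Suc j)
      = odd_fact L * (odd_fact j + 2 * int L * odd_fact_deriv j) * (2 * int L + 2 * int j + 1)]
      (mod (2 * int L)^2)"
    using cong_mult[OF Suc cong_refl, of "2 * int L + 2 * int j + 1"] by (simp add: algebra_simps)
  also have "odd_fact L * (odd_fact j + 2 * int L * odd_fact_deriv j) * (2 * int L + 2 * int j + 1)
    = odd_fact L * (odd_fact (Suc j) + 2 * int L * odd_fact_deriv (Suc j))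
      + (2 * int L)^2 * (odd_fact L * odd_fact_deriv j)"
    by (simp add: algebra_simps power2_eq_square)
  also have "[\<dots> = odd_fact L * (odd_fact (Suc j) + 2 * int L * odd_fact_deriv (Suc j))] (mod (2 * int L)^2)"
    by (simp add: cong_add_lcancel_0 cong_0_iff)
  finally show ?case .
qed

lemma cong_mod_periodic:
  fixes f :: "nat \<Rightarrow> 'a::unique_euclidean_semiring"
  assumes periodic: "\<And>i. P (i + p) \<Longrightarrow> [f (i + p) = f i] (mod M)"
    and invariant: "\<And>i. P (i + p) \<Longrightarrow> P i"
    and "P j"
  shows "[f j = f (j mod p)] (mod M)"
  using \<open>P j\<close>
proof (induction j rule: less_induct)
  case (less j)
  show ?case
  proof (cases "j < p")
    case True
    then show ?thesis by simp
  next
    case False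
    then obtain i where j: "j = i + p" by (metis add.commute le_add_diff_inverse not_less)
    show ?thesis
    proof (cases "p = 0")
      case False
      then have "[f i = f (i mod p)] (mod M)" using less j invariant by simp
      with periodic[OF less.prems[unfolded j]] show ?thesis unfolding j by (simp add: cong_trans)
    qed simp
  qed
qed

lemma odd_fact_period: "[odd_fact (j + 32) = odd_fact j] (mod 64)"
proof -
  have "[odd_fact 32 = 1] (mod 64)" by code_simp
  have "[odd_fact (32 + j) = odd_fact 32 * (odd_fact j + 64 * odd_fact_deriv j)] (mod 64)"
    using cong_dvd_modulus[OF odd_fact_add_cong[of 32 j], of 64] by simp
  also have "[odd_fact 32 * (odd_fact j + 64 * odd_fact_deriv j) = 1 * (odd_fact j + 0)] (mod 64)"
    using \<open>[odd_fact 32 = 1] (mod 64)\<close>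
    by (intro cong_mult cong_add cong_refl) (simp_all add: cong_0_iff)
  finally show ?thesis by (simp add: add.commute)
qed

lemma odd_fact_deriv_period: "[odd_fact_deriv (j + 32) = odd_fact_deriv j] (mod 16)"
proof (induction j)
  case 0
  show ?case by code_simp
next
  case (Suc j)
  have "[odd_fact (j + 32) = odd_fact j] (mod 16)"
    by (rule cong_dvd_modulus[OF odd_fact_period]) simp
  then have "16 dvd (odd_fact_deriv (j + 32) - odd_fact_deriv j) * (2 * int j + 1)
      + 16 * (4 * odd_fact_deriv (j + 32)) + (odd_fact (j + 32) - odd_fact j)"
    using Suc by (simp add: cong_iff_dvd_diff)
  moreover have "odd_fact_deriv (Suc j + 32) = odd_fact_deriv (j + 32) * (2 * int j + 65) + odd_fact (j + 32)"
    by (simp only: add_Suc odd_fact_deriv.simps) (simp add: algebra_simps)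
  ultimately show ?case by (simp add: cong_iff_dvd_diff algebra_simps)
qed

lemma odd_fact_deriv_pow2:
  assumes "3 \<le> N"
  shows "16 dvd odd_fact_deriv (2 ^ N)"
proof -
  have "list_all (\<lambda>r. 8 dvd r \<longrightarrow> 16 dvd odd_fact_deriv r) [0..<32]"
    by code_simp
  moreover have "8 dvd (2::nat) ^ N"
    using le_imp_power_dvd[OF assms, of "2::nat"] by simp
  then have "8 dvd (2::nat) ^ N mod 32" by (simp add: dvd_mod_iff)
  ultimately have "[odd_fact_deriv (2 ^ N mod 32) = 0] (mod 16)"
    by (simp add: list_all_iff cong_0_iff)
  moreover have "[odd_fact_deriv (2 ^ N) = odd_fact_deriv (2 ^ N mod 32)] (mod 16)"
    by (rule cong_mod_periodic[where P = "\<lambda>_. True"]) (simp_all add: odd_fact_deriv_period)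
  ultimately show ?thesis by (metis cong_trans cong_0_iff)
qed

lemma pow2_eq_8_mult:
  assumes "3 \<le> N"
  obtains p' :: int where "2 ^ N = 8 * p'"
proof -
  have "(2::int) ^ 3 dvd 2 ^ N" using assms by (rule le_imp_power_dvd)
  then show ?thesis using that by (auto elim!: dvdE)
qed

lemma pow2_dvd_square_mult_pow2:
  assumes "e \<le> 2 * N + 2"
  shows "(2::int) ^ e dvd (2 * int (k * 2 ^ N))^2"
proof -
  have "(2::int) ^ e dvd 2 ^ (2 * N + 2) * int k ^ 2"
    using le_imp_power_dvd[OF assms] by (rule dvd_mult2)
  also have "2 ^ (2 * N + 2) * int k ^ 2 = (2 * int (k * 2 ^ N))^2"
    by (simp add: power_mult_distrib power_add power_mult algebra_simps)
  finally show ?thesis .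
qed

lemma odd_fact_pow2:
  assumes "3 \<le> N"
  shows "[odd_fact (2 ^ N) = 1 + 2 ^ (N + 1)] (mod 2 ^ (N + 4))"
  using assms
proof (induction N rule: nat_induct_at_least)
  case base
  show ?case by code_simp
next
  case (Suc N)
  define p :: int where "p = 2 ^ N"
  have ip: "int (2 ^ N) = p" by (simp add: p_def)
  obtain p' where p': "p = 8 * p'"
    using pow2_eq_8_mult[OF Suc.hyps] unfolding p_def .
  obtain w where "odd_fact (2 ^ N) = 1 + 2 ^ (N + 1) + 2 ^ (N + 4) * w"
    using Suc.IH cong_sym cong_iff_lin by metis
  then have w: "odd_fact (2 ^ N) = 1 + 2 * p + 16 * p * w"
    by (simp add: p_def power_add)
  obtain e where e: "odd_fact_deriv (2 ^ N) = 16 * e"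
    using odd_fact_deriv_pow2[OF Suc.hyps] ..
  have modulus: "(2::int) ^ (Suc N + 4) = 32 * p" by (simp add: p_def power_add)
  have "(2::int) ^ (Suc N + 4) dvd (2 * int (2 ^ N))^2"
    using pow2_dvd_square_mult_pow2[of "Suc N + 4" N 1] Suc.hyps by simp
  moreover have "2 ^ Suc N = 2 ^ N + (2::nat) ^ N" by simp
  ultimately have "[odd_fact (2 ^ Suc N)
      = odd_fact (2 ^ N) * (odd_fact (2 ^ N) + 2 * int (2 ^ N) * odd_fact_deriv (2 ^ N))]
      (mod 2 ^ (Suc N + 4))"
    using cong_dvd_modulus[OF odd_fact_add_cong] by metis
  also have "odd_fact (2 ^ N) * (odd_fact (2 ^ N) + 2 * int (2 ^ N) * odd_fact_deriv (2 ^ N))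
      = 1 + 4 * p + 32 * p * (p' + w + 2 * p * w + 8 * p * w^2 + e * (1 + 2 * p + 16 * p * w))"
    unfolding w e ip by (simp add: p' algebra_simps power2_eq_square)
  also have "[\<dots> = 1 + 4 * p] (mod 2 ^ (Suc N + 4))"
    unfolding modulus by (simp add: cong_add_lcancel_0 cong_mult_self_left)
  also have "1 + 4 * p = 1 + 2 ^ (Suc N + 1)" by (simp add: p_def)
  finally show ?case .
qed

lemma odd_fact_mult_pow2:
  assumes "3 \<le> N"
  shows "[odd_fact (k * 2 ^ N) = 1 + int k * 2 ^ (N + 1)] (mod 2 ^ (N + 4))"
proof (induction k)
  case 0
  show ?case by simp
next
  case (Suc k)
  define p :: int where "p = 2 ^ N"
  have ip: "int (k * 2 ^ N) = int k * p" by (simp add: p_def)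
  have modulus: "(2::int) ^ (N + 4) = 16 * p" and two_p: "(2::int) ^ (N + 1) = 2 * p"
    by (simp_all add: p_def power_add)
  obtain p' where p': "p = 8 * p'"
    using pow2_eq_8_mult[OF assms] unfolding p_def .
  have deriv: "[2 * int (k * 2 ^ N) * odd_fact_deriv (2 ^ N) = 0] (mod 2 ^ (N + 4))"
    using odd_fact_deriv_pow2[OF assms] unfolding modulus ip cong_0_iff by (auto elim!: dvdE)
  have "(2::int) ^ (N + 4) dvd (2 * int (k * 2 ^ N))^2"
    using pow2_dvd_square_mult_pow2[of "N + 4" N k] assms by simp
  moreover have "Suc k * 2 ^ N = k * 2 ^ N + (2::nat) ^ N" by simp
  ultimately have "[odd_fact (Suc k * 2 ^ N)
      = odd_fact (k * 2 ^ N) * (odd_fact (2 ^ N) + 2 * int (k * 2 ^ N) * odd_fact_deriv (2 ^ N))]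
      (mod 2 ^ (N + 4))"
    using cong_dvd_modulus[OF odd_fact_add_cong] by metis
  also have "[odd_fact (k * 2 ^ N) * (odd_fact (2 ^ N) + 2 * int (k * 2 ^ N) * odd_fact_deriv (2 ^ N))
      = (1 + int k * 2 ^ (N + 1)) * (1 + 2 ^ (N + 1) + 0)] (mod 2 ^ (N + 4))"
    by (intro cong_mult cong_add Suc.IH odd_fact_pow2[OF assms] deriv)
  also have "(1 + int k * 2 ^ (N + 1)) * (1 + 2 ^ (N + 1) + 0)
      = (1 + int (Suc k) * 2 ^ (N + 1)) + 16 * p * (2 * int k * p')"
    unfolding two_p by (simp add: p' algebra_simps)
  also have "[\<dots> = 1 + int (Suc k) * 2 ^ (N + 1)] (mod 2 ^ (N + 4))"
    unfolding modulus by (simp only: cong_add_lcancel_0 cong_mult_self_left)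
  finally show ?case .
qed

lemma odd_fact_shift_cong:
  assumes "3 \<le> N" and "l = k * 2 ^ N"
  shows "[odd_fact (l + j) = odd_fact j + 2 * int l * (odd_fact j + odd_fact_deriv j)] (mod 2 ^ (N + 4))"
proof -
  have "(2::int) ^ (N + 4) dvd (2 * int l)^2"
    using pow2_dvd_square_mult_pow2[of "N + 4" N k] assms by simp
  then have "[odd_fact (l + j) = odd_fact l * (odd_fact j + 2 * int l * odd_fact_deriv j)] (mod 2 ^ (N + 4))"
    using cong_dvd_modulus[OF odd_fact_add_cong] by blast
  also have "[odd_fact l * (odd_fact j + 2 * int l * odd_fact_deriv j)
      = (1 + 2 * int l) * (odd_fact j + 2 * int l * odd_fact_deriv j)] (mod 2 ^ (N + 4))"
    using odd_fact_mult_pow2[OF assms(1), of k] assms(2)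
    by (intro cong_mult cong_refl) (simp add: power_add algebra_simps)
  also have "(1 + 2 * int l) * (odd_fact j + 2 * int l * odd_fact_deriv j)
      = odd_fact j + 2 * int l * (odd_fact j + odd_fact_deriv j) + (2 * int l)^2 * odd_fact_deriv j"
    by (simp add: algebra_simps power2_eq_square)
  also have "[\<dots> = odd_fact j + 2 * int l * (odd_fact j + odd_fact_deriv j)] (mod 2 ^ (N + 4))"
    using \<open>2 ^ (N + 4) dvd (2 * int l)^2\<close> by (simp add: cong_add_lcancel_0 cong_0_iff)
  finally show ?thesis .
qed

section \<open>The first-order coefficient\<close>

text \<open>For m = j + 1 and n = l + m,
  m (2n - 3)!! - n (2m - 3)!! \<equiv> l \<cdot> lin_coeff j (mod 2^(N+4) m); see g_shift.\<close>

definition lin_coeff :: "nat \<Rightarrow> int" where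
  "lin_coeff j = 2 * (int j + 1) * (odd_fact j + odd_fact_deriv j) - odd_fact j"

lemma lin_coeff_period:
  shows "[lin_coeff (j + 32) = lin_coeff j] (mod 32)"
    and "odd j \<Longrightarrow> [lin_coeff (j + 32) = lin_coeff j] (mod 64)"
proof -
  obtain a where a: "odd_fact (j + 32) = odd_fact j + 64 * a"
    using odd_fact_period cong_sym cong_iff_lin by metis
  obtain b where b: "odd_fact_deriv (j + 32) = odd_fact_deriv j + 16 * b"
    using odd_fact_deriv_period cong_sym cong_iff_lin by metis
  define c where "c = 2 * (odd_fact j + odd_fact_deriv j + 64 * a + 16 * b - a + 2 * (int j + 1) * a)"
  have diff: "lin_coeff (j + 32) - lin_coeff j = 32 * (c + (int j + 1) * b)"
    unfolding lin_coeff_def a b c_def by (simp add: algebra_simps)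
  then show "[lin_coeff (j + 32) = lin_coeff j] (mod 32)"
    by (simp add: cong_iff_dvd_diff)
  assume "odd j"
  then obtain h where "int j + 1 = 2 * h" by (metis even_of_nat odd_add odd_one evenE)
  moreover obtain c' where "c = 2 * c'" using c_def by blast
  ultimately show "[lin_coeff (j + 32) = lin_coeff j] (mod 64)"
    unfolding cong_iff_dvd_diff diff by (simp add: algebra_simps)
qed

lemma square_succ_period: "[(int (j + 32) + 1)^2 = (int j + 1)^2] (mod 64)"
  unfolding cong_iff_dvd_diff by (rule dvdI[of _ _ "int j + 17"]) (simp add: power2_eq_square algebra_simps)

lemma lin_coeff_reduce_mod_32:
  fixes c :: int
  shows "[lin_coeff j + c * (int j + 1)^2 = lin_coeff (j mod 32) + c * (int (j mod 32) + 1)^2] (mod 32)"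
    and "odd j \<Longrightarrow>
      [lin_coeff j + c * (int j + 1)^2 = lin_coeff (j mod 32) + c * (int (j mod 32) + 1)^2] (mod 64)"
proof -
  have square: "[c * (int (i + 32) + 1)^2 = c * (int i + 1)^2] (mod 64)" for i
    using square_succ_period by (rule cong_scalar_left)
  show "[lin_coeff j + c * (int j + 1)^2 = lin_coeff (j mod 32) + c * (int (j mod 32) + 1)^2] (mod 32)"
    using lin_coeff_period(1) cong_dvd_modulus[OF square]
    by (intro cong_mod_periodic[where P = "\<lambda>_. True"] cong_add) simp_all
  show "odd j \<Longrightarrow>
      [lin_coeff j + c * (int j + 1)^2 = lin_coeff (j mod 32) + c * (int (j mod 32) + 1)^2] (mod 64)"
    using lin_coeff_period(2) square
    by (intro cong_mod_periodic[where P = odd] cong_add) simp_all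
qed

lemma lin_coeff_cong_even:
  assumes "even j"
  shows "[lin_coeff j = (-1) ^ (j div 2) * (int j + 1)^2] (mod 4)"
proof -
  define r where "r = j mod 32"
  have sign: "(-1::int) ^ (j div 2) = (-1) ^ (r div 2)"
  proof -
    have "j div 2 = 16 * (j div 32) + r div 2" unfolding r_def by presburger
    then show ?thesis by (simp add: power_add power_mult)
  qed
  have "list_all (\<lambda>r. even r \<longrightarrow> [lin_coeff r - (-1) ^ (r div 2) * (int r + 1)^2 = 0] (mod 4))
      [0..<32]"
    by code_simp
  moreover have "even r" using assms unfolding r_def by presburger
  ultimately have "[lin_coeff r - (-1) ^ (r div 2) * (int r + 1)^2 = 0] (mod 4)"
    by (simp add: list_all_iff r_def)
  moreover have "[lin_coeff j - (-1) ^ (j div 2) * (int j + 1)^2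
      = lin_coeff r - (-1) ^ (r div 2) * (int r + 1)^2] (mod 4)"
    using cong_dvd_modulus[OF lin_coeff_reduce_mod_32(1)[where c = "- ((-1) ^ (r div 2))"]]
    by (simp add: sign r_def)
  ultimately show ?thesis
    using cong_trans cong_diff_iff_cong_0 by blast
qed

lemma lin_coeff_cong_1_mod_4:
  assumes "j mod 4 = 1"
  shows "[lin_coeff j + 2 * (int j + 1)^2 + 1 = 0] (mod 16)"
proof -
  define r where "r = j mod 32"
  have "list_all (\<lambda>r. r mod 4 = 1 \<longrightarrow> [lin_coeff r + 2 * (int r + 1)^2 + 1 = 0] (mod 16)) [0..<32]"
    by code_simp
  moreover have "r mod 4 = 1" using assms by (simp add: r_def mod_mod_cancel)
  ultimately have "[lin_coeff r + 2 * (int r + 1)^2 + 1 = 0] (mod 16)"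
    by (simp add: list_all_iff r_def)
  moreover have "[lin_coeff j + 2 * (int j + 1)^2 + 1 = lin_coeff r + 2 * (int r + 1)^2 + 1] (mod 16)"
    using cong_dvd_modulus[OF lin_coeff_reduce_mod_32(1)[of j 2]] by (simp add: r_def cong_add_rcancel)
  ultimately show ?thesis
    using cong_trans by blast
qed

lemma lin_coeff_cong_3_mod_8:
  assumes "j mod 8 = 3"
  shows "[lin_coeff j + 2 * (int j + 1)^2 - 1 = 0] (mod 64)"
proof -
  define r where "r = j mod 32"
  have "list_all (\<lambda>r. r mod 8 = 3 \<longrightarrow> [lin_coeff r + 2 * (int r + 1)^2 - 1 = 0] (mod 64)) [0..<32]"
    by code_simp
  moreover have "r mod 8 = 3" using assms by (simp add: r_def mod_mod_cancel)
  ultimately have "[lin_coeff r + 2 * (int r + 1)^2 - 1 = 0] (mod 64)"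
    by (simp add: list_all_iff r_def)
  moreover have "odd j" using assms by presburger
  moreover have "[lin_coeff j + 2 * (int j + 1)^2 - 1 = lin_coeff r + 2 * (int r + 1)^2 - 1] (mod 64)"
    using lin_coeff_reduce_mod_32(2)[of j 2] \<open>odd j\<close> by (simp add: r_def cong_diff)
  ultimately show ?thesis
    using cong_trans by blast
qed

lemma g_Suc: "g (Suc j) = (-1) ^ j * of_int (odd_fact j) / (2 * of_nat (Suc j))"
proof -
  have "2 * int (Suc j) - 3 = 2 * int j - 1" by simp
  then show ?thesis by (simp add: g_def dfact_eq_odd_fact)
qed

lemma g_shift:
  assumes "3 \<le> N" and "l = k * 2 ^ N" and "n = l + Suc j"
  obtains W where "g n - g (Suc j) = (-1) ^ j
    * of_int (int l * lin_coeff j + 2 ^ (N + 4) * int (Suc j) * W) / (2 * of_nat (Suc j) * of_nat n)"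
proof -
  obtain W where W: "odd_fact (l + j) = odd_fact j + 2 * int l * (odd_fact j + odd_fact_deriv j) + 2 ^ (N + 4) * W"
    using odd_fact_shift_cong[OF assms(1,2)] cong_sym cong_iff_lin by metis
  have "even l" using assms(1,2) by auto
  then have gn: "g n = (-1) ^ j * of_int (odd_fact (l + j)) / (2 * of_nat n)"
    using g_Suc[of "l + j"] assms(3) by (simp add: power_add)
  have "(of_nat n :: rat) \<noteq> 0" using assms(3) by simp
  then have "g n - g (Suc j) = (-1) ^ j
      * of_int (int (Suc j) * odd_fact (l + j) - int n * odd_fact j) / (2 * of_nat (Suc j) * of_nat n)"
    unfolding gn g_Suc by (simp add: field_simps del: of_nat_Suc)
  also have "int (Suc j) * odd_fact (l + j) - int n * odd_fact j
      = int l * lin_coeff j + 2 ^ (N + 4) * int (Suc j) * W"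
    unfolding W assms(3) lin_coeff_def by (simp add: algebra_simps)
  finally show ?thesis by (rule that)
qed

lemma cong2I:
  fixes A u :: int and t e :: nat and x y :: rat
  assumes u: "odd u" and A: "2^(e+t) dvd A" and xy: "x - y = of_int A / of_int (2^t * u)"
  shows "cong2 e x y"
proof -
  obtain p q where pq: "quotient_of (x - y) = (p, q)" by (cases "quotient_of (x - y)")
  have q0: "q > 0" using quotient_of_denom_pos[OF pq] .
  have cop: "coprime p q" using quotient_of_coprime[OF pq] .
  have xy2: "x - y = of_int p / of_int q" using quotient_of_div[OF pq] .
  have u0: "u \<noteq> 0" using u by auto
  have "(of_int p :: rat) / of_int q = of_int A / of_int (2^t * u)" using xy xy2 by simp
  then have "(of_int p :: rat) * of_int (2^t * u) = of_int A * of_int q"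
    using q0 u0 by (simp add: frac_eq_eq)
  then have E1: "p * (2^t * u) = A * q" by (metis of_int_eq_iff of_int_mult)
  obtain a where a: "A = 2^(e+t) * a" using A by (auto elim: dvdE)
  have "2^t * (p * u) = 2^t * (2^e * a * q)" using E1 unfolding a by (simp add: power_add algebra_simps)
  then have E2: "p * u = 2^e * a * q" by simp
  have qodd: "odd q"
  proof
    assume "even q"
    then have "2 dvd p * u" unfolding E2 by simp
    then have "even p" using u by simp
    with \<open>even q\<close> have "is_unit (2::int)" using coprime_common_divisor[OF cop] by blast
    then show False by simp
  qed
  have "2^e dvd p * u" unfolding E2 by simp
  then have "2^e dvd p" using u by (simp add: coprime_dvd_mult_left_iff)
  then show ?thesis unfolding cong2_def pq using qodd by simp
qed

lemma g_shift_cong_odd: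
  assumes N: "3 \<le> N" and l: "l = k * 2 ^ N" and n: "n = l + m" and m: "odd m"
  shows "cong2 (N + 1) (g n) (g m + (-1) ^ ((m - 1) div 2) * of_nat l / 2)"
proof -
  obtain j where j: "m = Suc j" using m by (cases m) auto
  have "even j" using m j by simp
  define \<epsilon> :: int where "\<epsilon> = (-1) ^ (j div 2)"
  obtain W where W: "g n - g m = (-1) ^ j
      * of_int (int l * lin_coeff j + 2 ^ (N + 4) * int m * W) / (2 * of_nat m * of_nat n)"
    using g_shift[OF N l] n j by blast
  obtain t where t: "lin_coeff j = \<epsilon> * int m ^ 2 + 4 * t"
    using lin_coeff_cong_even[OF \<open>even j\<close>] cong_sym cong_iff_lin j \<epsilon>_def
    by (metis of_nat_Suc add.commute)
  obtain p' where p': "(2::int) ^ N = 8 * p'" using N by (rule pow2_eq_8_mult)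
  define A where "A = int l * lin_coeff j + 2 ^ (N + 4) * int m * W - \<epsilon> * int l * int m * int n"
  have "A = 2 ^ (N + 2) * (int k * t - 2 * \<epsilon> * int k ^ 2 * p' * int m + 4 * int m * W)"
    unfolding A_def t n by (simp add: l power_add p' algebra_simps power2_eq_square)
  then have "2 ^ (N + 1 + 1) dvd A" by simp
  moreover have "g n - (g m + (-1) ^ ((m - 1) div 2) * of_nat l / 2) = of_int A / of_int (2 ^ 1 * (int m * int n))"
  proof -
    have "(of_nat m :: rat) \<noteq> 0" "(of_nat n :: rat) \<noteq> 0" using j n by simp_all
    moreover have "(-1) ^ ((m - 1) div 2) = (of_int \<epsilon> :: rat)" by (simp add: j \<epsilon>_def)
    ultimately show ?thesis
      unfolding W[unfolded diff_eq_eq] A_def using \<open>even j\<close> by (simp add: field_simps)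
  qed
  moreover have "odd (int m * int n)" using l n m N by auto
  ultimately show ?thesis by (intro cong2I)
qed

lemma pow2_dvd_shift_numerator:
  assumes "3 \<le> N" and "l = k * 2 ^ N" and "m = 2 ^ s * u" and "s \<le> 2"
    and "2 ^ (2 * s + 2) dvd c"
  shows "(2::int) ^ (N + 2 * s + 2) dvd int l * c + 2 * int l ^ 2 * int m + 2 ^ (N + 4) * int m * W"
proof -
  have "(2::int) ^ (N + 2 * s + 2) dvd int l * c"
    using assms(2,5) by (simp add: power_add mult_dvd_mono)
  moreover have "(2::int) ^ (N + 2 * s + 2) dvd 2 * int l ^ 2 * int m"
  proof -
    have "(2::int) ^ (N + 2 * s + 2) dvd 2 ^ (2 * N + s + 1)"
      using assms(1,4) by (intro le_imp_power_dvd) simp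
    then have "(2::int) ^ (N + 2 * s + 2) dvd 2 ^ (2 * N + s + 1) * (int k ^ 2 * int u)"
      by (rule dvd_mult2)
    also have "2 ^ (2 * N + s + 1) * (int k ^ 2 * int u) = 2 * int l ^ 2 * int m"
      by (simp add: assms(2,3) power_add power_mult_distrib power2_eq_square mult_2_right algebra_simps)
    finally show ?thesis .
  qed
  moreover have "(2::int) ^ (N + 2 * s + 2) dvd 2 ^ (N + 4) * int m * W"
  proof -
    have "(2::int) ^ (N + 2 * s + 2) dvd 2 ^ (N + 4 + s)"
      using assms(4) by (intro le_imp_power_dvd) simp
    then have "(2::int) ^ (N + 2 * s + 2) dvd 2 ^ (N + 4 + s) * (int u * W)"
      by (rule dvd_mult2)
    also have "2 ^ (N + 4 + s) * (int u * W) = 2 ^ (N + 4) * int m * W"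
      by (simp add: assms(3) power_add)
    finally show ?thesis .
  qed
  ultimately show ?thesis by (simp add: dvd_add)
qed

lemma two_mult_shift_eq:
  assumes "s \<le> N" and "l = k * 2 ^ N" and "n = l + m" and "m = 2 ^ s * u"
  shows "2 * int m * int n = 2 ^ (2 * s + 1) * (int u * (int k * 2 ^ (N - s) + int u))"
proof -
  have "(2::int) ^ N = 2 ^ s * 2 ^ (N - s)"
    using assms(1) by (simp flip: power_add)
  then show ?thesis
    unfolding assms(2-4) by (simp add: power_add mult_2_right algebra_simps)
qed

lemma g_shift_cong_even:
  fixes \<sigma> :: int
  assumes N: "3 \<le> N" and l: "l = k * 2 ^ N" and n: "n = l + m" and m: "m = 2 ^ s * u"
    and lin: "[lin_coeff (m - 1) + 2 * int m ^ 2 + \<sigma> = 0] (mod 2 ^ (2 * s + 2))"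
    and u: "odd u" and s: "1 \<le> s" "s \<le> 2"
  shows "cong2 (N + 1) (g n) (g m + of_nat l + of_int \<sigma> * of_nat l / (2 * of_nat m * of_nat n))"
proof -
  have "m \<noteq> 0" using m u by (auto intro: odd_pos)
  then obtain j where j: "m = Suc j" using not0_implies_Suc by blast
  have "even m" using m s by (cases s) auto
  then have "odd j" using j by simp
  obtain W where W: "g n - g m = (-1) ^ j
      * of_int (int l * lin_coeff j + 2 ^ (N + 4) * int m * W) / (2 * of_nat m * of_nat n)"
    using g_shift[OF N l] n j by blast
  define A where "A = - (int l * (lin_coeff j + 2 * int m ^ 2 + \<sigma>)
    + 2 * int l ^ 2 * int m + 2 ^ (N + 4) * int m * W)"
  have "2 ^ (N + 2 * s + 2) dvd int l * (lin_coeff j + 2 * int m ^ 2 + \<sigma>)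
    + 2 * int l ^ 2 * int m + 2 ^ (N + 4) * int m * W"
    by (rule pow2_dvd_shift_numerator[OF N l m s(2)]) (use lin j in \<open>simp add: cong_0_iff\<close>)
  moreover have "N + 1 + (2 * s + 1) = N + 2 * s + 2" by simp
  ultimately have "2 ^ (N + 1 + (2 * s + 1)) dvd A"
    unfolding A_def dvd_minus_iff by metis
  moreover define v where "v = int u * (int k * 2 ^ (N - s) + int u)"
  have "odd v" using N u s by (simp add: v_def)
  moreover have "2 * int m * int n = 2 ^ (2 * s + 1) * v"
    unfolding v_def using N s by (intro two_mult_shift_eq[OF _ l n m]) simp
  then have "2 * of_nat m * of_nat n = (of_int (2 ^ (2 * s + 1) * v) :: rat)"
    by (metis of_int_of_nat_eq of_int_mult of_int_numeral)
  moreover have "g n - (g m + of_nat l + of_int \<sigma> * of_nat l / (2 * of_nat m * of_nat n))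
      = of_int A / (2 * of_nat m * of_nat n)"
  proof -
    have "(of_nat m :: rat) \<noteq> 0" "(of_nat n :: rat) \<noteq> 0" using j n by simp_all
    then have "g n - (g m + of_nat l + of_int \<sigma> * of_nat l / (2 * of_nat m * of_nat n))
      = (- of_int (int l * lin_coeff j + 2 ^ (N + 4) * int m * W) - of_nat l * (2 * of_nat m * of_nat n)
          - of_int \<sigma> * of_nat l) / (2 * of_nat m * of_nat n)"
      unfolding W[unfolded diff_eq_eq] using \<open>odd j\<close> by (simp add: field_simps)
    also have "\<dots> = of_int A / (2 * of_nat m * of_nat n)"
      unfolding A_def n by (simp add: algebra_simps power2_eq_square)
    finally show ?thesis .
  qed
  ultimately show ?thesis by (metis cong2I)
qed

lemma pow2_mult_odd_part:
  fixes m :: nat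
  assumes "2 ^ s dvd m" and "\<not> 2 ^ Suc s dvd m"
  obtains v where "m = 2 ^ s * (2 * v + 1)"
proof -
  obtain u where u: "m = 2 ^ s * u" using assms(1) ..
  then have "odd u" using assms(2) by auto
  then obtain v where "u = 2 * v + 1" by (rule oddE)
  with u that show ?thesis by simp
qed

theorem lemma4p5:
  fixes N k l m n :: nat
  assumes "N \<ge> 3" and "odd k" and "k > 0" and "l = k * 2 ^ N"
    and "m > 0" and "n = l + m"
  shows "(odd m \<longrightarrow>
            cong2 (N + 1) (g n) (g m + (-1) ^ ((m - 1) div 2) * of_nat l / 2))
       \<and> (2 dvd m \<and> \<not> 4 dvd m \<longrightarrow>
            cong2 (N + 1) (g n) (g m + of_nat l + of_nat l / (2 * of_nat m * of_nat n)))
       \<and> (4 dvd m \<and> \<not> 8 dvd m \<longrightarrow>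
            cong2 (N + 1) (g n) (g m + of_nat l - of_nat l / (2 * of_nat m * of_nat n)))"
proof (intro conjI impI)
  assume "odd m"
  then show "cong2 (N + 1) (g n) (g m + (-1) ^ ((m - 1) div 2) * of_nat l / 2)"
    by (rule g_shift_cong_odd[OF assms(1,4,6)])
next
  assume "2 dvd m \<and> \<not> 4 dvd m"
  then obtain v where v: "m = 2 ^ 1 * (2 * v + 1)" using pow2_mult_odd_part[of 1 m] by auto
  have lin: "[lin_coeff (m - 1) + 2 * int m ^ 2 + 1 = 0] (mod 2 ^ (2 * 1 + 2))"
    using lin_coeff_cong_1_mod_4[of "m - 1"] by (simp add: v)
  have "cong2 (N + 1) (g n) (g m + of_nat l + of_int 1 * of_nat l / (2 * of_nat m * of_nat n))"
    by (rule g_shift_cong_even[OF assms(1,4,6) v lin]) simp_all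
  then show "cong2 (N + 1) (g n) (g m + of_nat l + of_nat l / (2 * of_nat m * of_nat n))" by simp
next
  assume "4 dvd m \<and> \<not> 8 dvd m"
  then obtain v where v: "m = 2 ^ 2 * (2 * v + 1)" using pow2_mult_odd_part[of 2 m] by auto
  have lin: "[lin_coeff (m - 1) + 2 * int m ^ 2 + (- 1) = 0] (mod 2 ^ (2 * 2 + 2))"
    using lin_coeff_cong_3_mod_8[of "m - 1"] by (simp add: v)
  have "cong2 (N + 1) (g n) (g m + of_nat l + of_int (- 1) * of_nat l / (2 * of_nat m * of_nat n))"
    by (rule g_shift_cong_even[OF assms(1,4,6) v lin]) simp_all
  then show "cong2 (N + 1) (g n) (g m + of_nat l - of_nat l / (2 * of_nat m * of_nat n))" by simp
qed

end
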